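(* Let $\mathcal{X}$ be a finite alphabet with $|\mathcal{X}|\ge 2$, let $P$ be a pmf on $\mathcal{X}$, and let $X_0,X_1,X_2,\dots$ be i.i.d. with law $P$. Let $e:\mathcal{X}\to\{0,1\}^*$ be a prefix-free code with codeword lengths $\ell(x)=|e(x)|\ge 1$, and let $L=\ell(X)$ with $X\sim P$. For the memoryless update scheme defined in the context, the average age satisfies, almost surely, $$\bar A(e)=\mathbb{E}[L]+\frac{\mathbb{E}[L^2]}{2\,\mathbb{E}[L]}-\frac12 .$$
   Context: Memoryless update scheme: the transmitter sends one bit per unit time over a noiseless channel. Set $s_0=0$ and recursively $s_k=s_{k-1}+\ell(X_{s_{k-1}})$ for $k\ge1$: at time $s_{k-1}$ the channel is free, the transmitter takes the current symbol $X_{s_{k-1}}$, and its codeword $e(X_{s_{k-1}})$ is completely received at time $s_k$; symbols $X_t$ arriving while the channel is busy are never sent. The receiver's time index is $U(t)=0$ for $0\le t<s_1$ and $U(t)=s_{k-1}$ for $s_k\le t<s_{k+1}$, $k\ge1$ (i.e. the receiver outputs the most recent fully received symbol, which was observed at time $U(t)$). The age is $A(t)=t-U(t)$ and the average age is $\bar A(e)=\limsup_{T\to\infty}\frac1T\sum_{t=1}^T A(t)$. *)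

theory Defs
  imports "HOL-Probability.Probability" "HOL-Library.Sublist"
begin

definition prefix_free_code :: "('a \<Rightarrow> bool list) \<Rightarrow> bool" where
  "prefix_free_code e \<longleftrightarrow> (\<forall>x y. x \<noteq> y \<longrightarrow> \<not> prefix (e x) (e y))"

text \<open>Transmission completion times: s 0 = 0, s k = s (k-1) + length (e (xs (s (k-1)))).\<close>
primrec sched :: "('a \<Rightarrow> bool list) \<Rightarrow> (nat \<Rightarrow> 'a) \<Rightarrow> nat \<Rightarrow> nat" where
  "sched e xs 0 = 0"
| "sched e xs (Suc k) = sched e xs k + length (e (xs (sched e xs k)))"

definition recv_index :: "('a \<Rightarrow> bool list) \<Rightarrow> (nat \<Rightarrow> 'a) \<Rightarrow> nat \<Rightarrow> nat" where
  "recv_index e xs t =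
     (if t < sched e xs 1 then 0
      else sched e xs ((THE k. 1 \<le> k \<and> sched e xs k \<le> t \<and> t < sched e xs (Suc k)) - 1))"

definition age :: "('a \<Rightarrow> bool list) \<Rightarrow> (nat \<Rightarrow> 'a) \<Rightarrow> nat \<Rightarrow> real" where
  "age e xs t = real t - real (recv_index e xs t)"

definition avg_age :: "('a \<Rightarrow> bool list) \<Rightarrow> (nat \<Rightarrow> 'a) \<Rightarrow> ereal" where
  "avg_age e xs = limsup (\<lambda>T. ereal ((1 / real T) * (\<Sum>t=1..T. age e xs t)))"

end

theory Submission
  imports Defs
begin

text \<open>The transmitted symbols Y k = X (s k) are again i.i.d. with law P: once the first k
  transmitted symbols are fixed, the start times s 0 < ... < s k are deterministic, so the event
  concerns inputs at distinct times. During the k-th transmission slot [s k, s (k+1)) of length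
  L k the age runs through L (k-1) + j for j < L k, so the age accumulated up to s n is
  the sum over k < n of L (k-1) * L k + L k * (L k - 1) / 2. Functions of the pairs (Y k, Y (k+1))
  are independent along even and along odd k, so Hoeffding's inequality and Borel-Cantelli give a
  strong law for their averages: this sum divided by n tends to E[L]^2 + E[L^2]/2 - E[L]/2 almost
  surely, while s n / n tends to E[L]. The average age is the ratio of the two limits.\<close>

lemma tendsto_div_bounded_diff:
  fixes a b d :: "'a \<Rightarrow> real"
  assumes lim: "((\<lambda>x. b x / d x) \<longlongrightarrow> l) F" and d: "filterlim d at_top F"
    and bounded: "\<And>x. \<bar>a x - b x\<bar> \<le> K"
  shows "((\<lambda>x. a x / d x) \<longlongrightarrow> l) F"
proof -
  have "((\<lambda>x. (a x - b x) / d x) \<longlongrightarrow> 0) F"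
  proof (rule Lim_null_comparison)
    have "eventually (\<lambda>x. 0 < d x) F"
      using d by (simp add: filterlim_at_top_dense)
    then show "eventually (\<lambda>x. norm ((a x - b x) / d x) \<le> K / d x) F"
      by (elim eventually_mono) (simp add: abs_divide divide_right_mono bounded)
    show "((\<lambda>x. K / d x) \<longlongrightarrow> 0) F"
      by (rule tendsto_divide_0[OF tendsto_const filterlim_at_top_imp_at_infinity[OF d]])
  qed
  from tendsto_add[OF lim this] show ?thesis
    by (simp add: add_divide_distrib[symmetric])
qed

lemma sum_real_lessThan: "(\<Sum>j<m. real j) = real m * (real m - 1) / 2"
  by (induction m) (simp_all add: field_simps)

lemma expectation_finite_pmf:
  "measure_pmf.expectation (p :: 'a::finite pmf) f = (\<Sum>x\<in>UNIV. f x * pmf p x)"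
  by (rule integral_measure_pmf_real) auto

lemma expectation_pair_pmf_mult:
  fixes f g :: "'a::finite \<Rightarrow> real"
  shows "measure_pmf.expectation (pair_pmf p q) (\<lambda>(x, y). f x * g y)
    = measure_pmf.expectation p f * measure_pmf.expectation q g"
proof -
  have "measure_pmf.expectation (pair_pmf p q) (\<lambda>(x, y). f x * g y)
      = (\<Sum>(x, y)\<in>UNIV \<times> UNIV. f x * g y * pmf (pair_pmf p q) (x, y))"
    by (simp add: expectation_finite_pmf UNIV_Times_UNIV case_prod_beta')
  also have "\<dots> = (\<Sum>x\<in>UNIV. \<Sum>y\<in>UNIV. (f x * pmf p x) * (g y * pmf q y))"
    unfolding sum.cartesian_product by (rule sum.cong) (auto simp: pmf_pair)
  finally show ?thesis
    by (simp add: expectation_finite_pmf sum_product)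
qed

section \<open>A strong law for bounded sequences with independent even and odd parts\<close>

context prob_space
begin

lemma prob_sum_deviation_le:
  fixes Z :: "nat \<Rightarrow> 'a \<Rightarrow> real"
  assumes indep: "indep_vars (\<lambda>_. borel) Z I" and I: "I \<subseteq> {..<n}"
    and bounded: "\<And>i \<omega>. i \<in> I \<Longrightarrow> \<omega> \<in> space M \<Longrightarrow> \<bar>Z i \<omega>\<bar> \<le> K" and K: "0 < K"
    and mean: "\<And>i. i \<in> I \<Longrightarrow> expectation (Z i) = m" and \<delta>: "0 < \<delta>"
  shows "prob {\<omega>\<in>space M. \<delta> \<le> \<bar>(\<Sum>i\<in>I. Z i \<omega>) - real (card I) * m\<bar>}
           \<le> 2 * exp (- \<delta>\<^sup>2 / (2 * real n * K\<^sup>2))"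
proof (cases "I = {}")
  case True
  then show ?thesis using \<delta> by simp
next
  case False
  have fin: "finite I" using I finite_subset by blast
  have card: "0 < card I" "card I \<le> n"
    using False fin card_mono[OF _ I] by (auto simp: card_gt_0_iff)
  interpret Hoeffding_ineq M I Z "\<lambda>_. -K" "\<lambda>_. K" "real (card I) * m"
  proof unfold_locales
    show "AE \<omega> in M. Z i \<omega> \<in> {-K..K}" if "i \<in> I" for i
      using bounded[OF that] by (intro AE_I2) (force simp: abs_le_iff)
    show "real (card I) * m \<equiv> (\<Sum>i\<in>I. expectation (Z i))" by (simp add: mean)
  qed (use fin indep in auto)
  have hoeffding: "prob {\<omega>\<in>space M. \<delta> \<le> \<bar>(\<Sum>i\<in>I. Z i \<omega>) - real (card I) * m\<bar>}
      \<le> 2 * exp (-2 * \<delta>\<^sup>2 / (\<Sum>i\<in>I. (K - - K)\<^sup>2))"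
    by (rule Hoeffding_ineq_abs_ge) (use \<delta> K card in auto)
  have "(\<Sum>i\<in>I. (K - - K)\<^sup>2) = 4 * real (card I) * K\<^sup>2"
    by (simp add: power2_eq_square)
  moreover have "\<delta>\<^sup>2 / (2 * real n * K\<^sup>2) \<le> \<delta>\<^sup>2 / (2 * real (card I) * K\<^sup>2)"
    using card K by (intro divide_left_mono) auto
  ultimately have "exp (-2 * \<delta>\<^sup>2 / (\<Sum>i\<in>I. (K - - K)\<^sup>2)) \<le> exp (- \<delta>\<^sup>2 / (2 * real n * K\<^sup>2))"
    by simp
  with hoeffding show ?thesis
    by linarith
qed

lemma prob_avg_deviation_le_even_odd:
  fixes Z :: "nat \<Rightarrow> 'a \<Rightarrow> real"
  assumes indep_even: "indep_vars (\<lambda>_. borel) Z {k. even k}"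
    and indep_odd: "indep_vars (\<lambda>_. borel) Z {k. odd k}"
    and bounded: "\<And>k \<omega>. \<omega> \<in> space M \<Longrightarrow> \<bar>Z k \<omega>\<bar> \<le> K" and K: "0 < K"
    and mean: "\<And>k. expectation (Z k) = m" and \<epsilon>: "0 < \<epsilon>"
  shows "prob {\<omega>\<in>space M. real n * \<epsilon> \<le> \<bar>(\<Sum>k<n. Z k \<omega>) - real n * m\<bar>}
           \<le> 4 * exp (- real n * \<epsilon>\<^sup>2 / (8 * K\<^sup>2))"
proof (cases "n = 0")
  case True
  then show ?thesis by (simp add: prob_space)
next
  case False
  have [measurable]: "Z k \<in> borel_measurable M" for k
    using indep_even indep_odd by (cases "even k") (auto simp: indep_vars_def)
  define E where "E I = {\<omega>\<in>space M. real n * \<epsilon> / 2 \<le> \<bar>(\<Sum>i\<in>I. Z i \<omega>) - real (card I) * m\<bar>}" for I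
  define I0 where "I0 = {k. k < n \<and> even k}"
  define I1 where "I1 = {k. k < n \<and> odd k}"
  have split: "{..<n} = I0 \<union> I1" "I0 \<inter> I1 = {}" "finite I0" "finite I1"
    by (auto simp: I0_def I1_def)
  have card_split: "card I0 + card I1 = n"
    using card_Un_disjoint[of I0 I1] split by (metis card_lessThan)
  have sum_split: "(\<Sum>k<n. Z k \<omega>) - real n * m
      = ((\<Sum>i\<in>I0. Z i \<omega>) - real (card I0) * m) + ((\<Sum>i\<in>I1. Z i \<omega>) - real (card I1) * m)"
    for \<omega>
    unfolding split(1) using split card_split[symmetric] by (simp add: sum.union_disjoint algebra_simps)
  have incl: "{\<omega>\<in>space M. real n * \<epsilon> \<le> \<bar>(\<Sum>k<n. Z k \<omega>) - real n * m\<bar>} \<subseteq> E I0 \<union> E I1"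
  proof
    fix \<omega> assume "\<omega> \<in> {\<omega>\<in>space M. real n * \<epsilon> \<le> \<bar>(\<Sum>k<n. Z k \<omega>) - real n * m\<bar>}"
    moreover have "real n * \<epsilon> / 2 \<le> \<bar>a\<bar> \<or> real n * \<epsilon> / 2 \<le> \<bar>b\<bar>"
      if "real n * \<epsilon> \<le> \<bar>a + b\<bar>" for a b :: real
      using that abs_triangle_ineq[of a b] by linarith
    ultimately show "\<omega> \<in> E I0 \<union> E I1"
      unfolding E_def sum_split by blast
  qed
  have E_le: "prob (E I) \<le> 2 * exp (- real n * \<epsilon>\<^sup>2 / (8 * K\<^sup>2))"
    if "I \<subseteq> {..<n}" "indep_vars (\<lambda>_. borel) Z I" for I
  proof -
    have "(real n * \<epsilon> / 2)\<^sup>2 / (2 * real n * K\<^sup>2) = real n * \<epsilon>\<^sup>2 / (8 * K\<^sup>2)"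
      using False by (simp add: power2_eq_square)
    moreover have "prob (E I) \<le> 2 * exp (- (real n * \<epsilon> / 2)\<^sup>2 / (2 * real n * K\<^sup>2))"
      unfolding E_def
      by (rule prob_sum_deviation_le[OF that(2,1) _ K]) (use bounded mean \<epsilon> False in auto)
    ultimately show ?thesis by simp
  qed
  have "prob (E I0) \<le> 2 * exp (- real n * \<epsilon>\<^sup>2 / (8 * K\<^sup>2))"
    by (rule E_le) (auto simp: I0_def intro: indep_vars_subset[OF indep_even])
  moreover have "prob (E I1) \<le> 2 * exp (- real n * \<epsilon>\<^sup>2 / (8 * K\<^sup>2))"
    by (rule E_le) (auto simp: I1_def intro: indep_vars_subset[OF indep_odd])
  ultimately have sum_le: "prob (E I0) + prob (E I1) \<le> 4 * exp (- real n * \<epsilon>\<^sup>2 / (8 * K\<^sup>2))"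
    by simp
  have "prob {\<omega>\<in>space M. real n * \<epsilon> \<le> \<bar>(\<Sum>k<n. Z k \<omega>) - real n * m\<bar>} \<le> prob (E I0 \<union> E I1)"
    using incl by (intro finite_measure_mono) (auto simp: E_def)
  also have "\<dots> \<le> prob (E I0) + prob (E I1)"
    by (rule measure_Un_le) (auto simp: E_def)
  finally show ?thesis using sum_le by simp
qed

lemma AE_avg_tendsto_if_summable_deviation:
  fixes S :: "nat \<Rightarrow> 'a \<Rightarrow> real"
  assumes [measurable]: "\<And>n. S n \<in> borel_measurable M"
    and summable: "\<And>\<epsilon>. 0 < \<epsilon> \<Longrightarrow>
      summable (\<lambda>n. prob {\<omega>\<in>space M. real n * \<epsilon> \<le> \<bar>S n \<omega> - real n * m\<bar>})"
  shows "AE \<omega> in M. (\<lambda>n. S n \<omega> / real n) \<longlonglongrightarrow> m"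
proof -
  have eventually_close: "AE \<omega> in M. eventually (\<lambda>n. \<bar>S n \<omega> / real n - m\<bar> < \<epsilon>) sequentially"
    if \<epsilon>: "0 < \<epsilon>" for \<epsilon>
  proof -
    define A where "A n = {\<omega>\<in>space M. real n * \<epsilon> \<le> \<bar>S n \<omega> - real n * m\<bar>}" for n
    have "AE \<omega> in M. eventually (\<lambda>n. \<omega> \<in> space M - A n) sequentially"
      by (rule borel_cantelli_AE1) (use summable[OF \<epsilon>] in \<open>auto simp: A_def emeasure_eq_measure\<close>)
    then show ?thesis
    proof (rule eventually_mono)
      fix \<omega> assume "eventually (\<lambda>n. \<omega> \<in> space M - A n) sequentially"
      then have "eventually (\<lambda>n. \<omega> \<in> space M - A n \<and> 0 < n) sequentially"
        by (intro eventually_conj eventually_gt_at_top)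
      then show "eventually (\<lambda>n. \<bar>S n \<omega> / real n - m\<bar> < \<epsilon>) sequentially"
      proof (rule eventually_mono, elim conjE)
        fix n :: nat assume "\<omega> \<in> space M - A n" "0 < n"
        then have "\<bar>S n \<omega> - real n * m\<bar> < real n * \<epsilon>" "0 < real n"
          by (auto simp: A_def)
        moreover have "S n \<omega> / real n - m = (S n \<omega> - real n * m) / real n"
          using \<open>0 < n\<close> by (simp add: field_simps)
        ultimately show "\<bar>S n \<omega> / real n - m\<bar> < \<epsilon>"
          by (simp add: abs_divide divide_less_eq mult.commute)
      qed
    qed
  qed
  have "AE \<omega> in M. \<forall>j::nat. eventually (\<lambda>n. \<bar>S n \<omega> / real n - m\<bar> < inverse (Suc j)) sequentially"
    by (subst AE_all_countable) (auto intro: eventually_close)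
  then show ?thesis
  proof (rule eventually_mono)
    fix \<omega>
    assume close: "\<forall>j::nat. eventually (\<lambda>n. \<bar>S n \<omega> / real n - m\<bar> < inverse (Suc j)) sequentially"
    show "(\<lambda>n. S n \<omega> / real n) \<longlonglongrightarrow> m"
    proof (rule tendstoI)
      fix r :: real assume "0 < r"
      then obtain j where "inverse (Suc j) < r" using reals_Archimedean by blast
      with close[rule_format, of j] show "eventually (\<lambda>n. dist (S n \<omega> / real n) m < r) sequentially"
        by (elim eventually_mono) (simp add: dist_real_def)
    qed
  qed
qed

lemma AE_avg_tendsto_even_odd:
  fixes Z :: "nat \<Rightarrow> 'a \<Rightarrow> real"
  assumes indep_even: "indep_vars (\<lambda>_. borel) Z {k. even k}"
    and indep_odd: "indep_vars (\<lambda>_. borel) Z {k. odd k}"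
    and bounded: "\<And>k \<omega>. \<omega> \<in> space M \<Longrightarrow> \<bar>Z k \<omega>\<bar> \<le> K"
    and mean: "\<And>k. expectation (Z k) = m"
  shows "AE \<omega> in M. (\<lambda>n. (\<Sum>k<n. Z k \<omega>) / real n) \<longlonglongrightarrow> m"
proof (rule AE_avg_tendsto_if_summable_deviation)
  have "Z k \<in> borel_measurable M" for k
    using indep_even indep_odd by (cases "even k") (auto simp: indep_vars_def)
  then show "(\<lambda>\<omega>. \<Sum>k<n. Z k \<omega>) \<in> borel_measurable M" for n
    by measurable
  fix \<epsilon> :: real assume "0 < \<epsilon>"
  define K' where "K' = max 1 K"
  define c where "c = \<epsilon>\<^sup>2 / (8 * K'\<^sup>2)"
  have "0 < c" using \<open>0 < \<epsilon>\<close> by (simp add: c_def K'_def)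
  have K': "0 < K'" "\<And>k \<omega>. \<omega> \<in> space M \<Longrightarrow> \<bar>Z k \<omega>\<bar> \<le> K'"
    using bounded by (force simp: K'_def le_max_iff_disj)+
  show "summable (\<lambda>n. prob {\<omega>\<in>space M. real n * \<epsilon> \<le> \<bar>(\<Sum>k<n. Z k \<omega>) - real n * m\<bar>})"
  proof (rule summable_comparison_test')
    show "summable (\<lambda>n. 4 * exp (-c) ^ n)"
      using \<open>0 < c\<close> by (intro summable_mult summable_geometric) simp
    fix n
    have "exp (- real n * \<epsilon>\<^sup>2 / (8 * K'\<^sup>2)) = exp (-c) ^ n"
      by (simp add: c_def exp_of_nat_mult[symmetric])
    moreover have "prob {\<omega>\<in>space M. real n * \<epsilon> \<le> \<bar>(\<Sum>k<n. Z k \<omega>) - real n * m\<bar>}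
        \<le> 4 * exp (- real n * \<epsilon>\<^sup>2 / (8 * K'\<^sup>2))"
      by (rule prob_avg_deviation_le_even_odd[OF indep_even indep_odd K'(2,1) mean \<open>0 < \<epsilon>\<close>])
    ultimately show "norm (prob {\<omega>\<in>space M. real n * \<epsilon> \<le> \<bar>(\<Sum>k<n. Z k \<omega>) - real n * m\<bar>})
        \<le> 4 * exp (-c) ^ n"
      by simp
  qed
qed

end

locale finite_iid = prob_space +
  fixes Y :: "nat \<Rightarrow> 'a \<Rightarrow> 'b::finite" and P :: "'b pmf"
  assumes indep_Y: "indep_vars (\<lambda>_. count_space UNIV) Y UNIV"
    and distr_Y: "\<And>k. distr M (count_space UNIV) (Y k) = measure_pmf P"
begin

lemma measurable_Y [measurable]: "Y k \<in> M \<rightarrow>\<^sub>M count_space UNIV"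
  using indep_Y by (auto simp: indep_vars_def)

lemma prob_Y: "prob (Y k -` A \<inter> space M) = measure_pmf.prob P A"
  using measure_distr[of "Y k" M "count_space UNIV" A] by (simp add: distr_Y)

lemma distr_pair_Y:
  assumes "i \<noteq> j"
  shows "distr M (count_space UNIV) (\<lambda>\<omega>. (Y i \<omega>, Y j \<omega>)) = measure_pmf (pair_pmf P P)"
proof (rule measure_eqI_countable[where A=UNIV])
  fix z :: "'b \<times> 'b"
  obtain x y where z: "z = (x, y)" by fastforce
  define A where "A k = (if k = i then {x} else {y})" for k
  have "(\<lambda>\<omega>. (Y i \<omega>, Y j \<omega>)) -` {z} \<inter> space M = (\<Inter>k\<in>{i, j}. Y k -` A k \<inter> space M)"
    using assms by (auto simp: z A_def)
  moreover have "prob (\<Inter>k\<in>{i, j}. Y k -` A k \<inter> space M) = (\<Prod>k\<in>{i, j}. prob (Y k -` A k \<inter> space M))"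
    by (rule indep_varsD[OF indep_Y]) auto
  ultimately have "prob ((\<lambda>\<omega>. (Y i \<omega>, Y j \<omega>)) -` {z} \<inter> space M) = pmf P x * pmf P y"
    using assms by (simp add: A_def prob_Y measure_pmf_single)
  then show "emeasure (distr M (count_space UNIV) (\<lambda>\<omega>. (Y i \<omega>, Y j \<omega>))) {z}
      = emeasure (measure_pmf (pair_pmf P P)) {z}"
    by (simp add: emeasure_distr emeasure_eq_measure emeasure_pmf_single pmf_pair z)
qed simp_all

lemma expectation_pair_Y:
  fixes h :: "'b \<Rightarrow> 'b \<Rightarrow> real"
  assumes "i \<noteq> j"
  shows "expectation (\<lambda>\<omega>. h (Y i \<omega>) (Y j \<omega>)) = measure_pmf.expectation (pair_pmf P P) (case_prod h)"
  using integral_distr[of "\<lambda>\<omega>. (Y i \<omega>, Y j \<omega>)" M "count_space UNIV" "case_prod h"]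
  by (simp add: distr_pair_Y[OF assms])

lemma indep_vars_consecutive_pairs:
  assumes no_neighbours: "\<And>k. k \<in> S \<Longrightarrow> Suc k \<notin> S"
  shows "indep_vars (\<lambda>_. borel) (\<lambda>k \<omega>. h (Y k \<omega>) (Y (Suc k) \<omega>) :: real) S"
proof -
  have restricted: "indep_vars (\<lambda>k. PiM {k, Suc k} (\<lambda>_. count_space UNIV)) (\<lambda>k \<omega>. restrict (\<lambda>i. Y i \<omega>) {k, Suc k}) S"
    by (rule indep_vars_restrict[OF indep_Y])
      (auto simp: disjoint_family_on_def dest: no_neighbours)
  have component: "(\<lambda>r. h (r k) (r (Suc k))) \<in> PiM {k, Suc k} (\<lambda>_. count_space UNIV) \<rightarrow>\<^sub>M borel" for k
  proof -
    have "(\<lambda>r. h x (r (Suc k))) \<in> PiM {k, Suc k} (\<lambda>_. count_space UNIV) \<rightarrow>\<^sub>M borel" for x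
      by (rule measurable_compose[OF measurable_component_singleton]) auto
    then have "(\<lambda>r. (\<lambda>x r. h x (r (Suc k))) (r k) r) \<in> PiM {k, Suc k} (\<lambda>_. count_space UNIV) \<rightarrow>\<^sub>M borel"
      by (rule measurable_compose_countable) (rule measurable_component_singleton, simp)
    then show ?thesis by simp
  qed
  show ?thesis
    using indep_vars_compose2[OF restricted component] by simp
qed

theorem AE_pair_avg_tendsto:
  fixes h :: "'b \<Rightarrow> 'b \<Rightarrow> real"
  shows "AE \<omega> in M. (\<lambda>n. (\<Sum>k<n. h (Y k \<omega>) (Y (Suc k) \<omega>)) / real n)
      \<longlonglongrightarrow> measure_pmf.expectation (pair_pmf P P) (case_prod h)"
proof (rule AE_avg_tendsto_even_odd)
  show "indep_vars (\<lambda>_. borel) (\<lambda>k \<omega>. h (Y k \<omega>) (Y (Suc k) \<omega>)) {k. even k}"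
    "indep_vars (\<lambda>_. borel) (\<lambda>k \<omega>. h (Y k \<omega>) (Y (Suc k) \<omega>)) {k. odd k}"
    by (auto intro: indep_vars_consecutive_pairs)
  show "\<bar>h (Y k \<omega>) (Y (Suc k) \<omega>)\<bar> \<le> Max (range (\<lambda>(x, y). \<bar>h x y\<bar>))" for k \<omega>
    by (rule Max_ge) auto
  show "expectation (\<lambda>\<omega>. h (Y k \<omega>) (Y (Suc k) \<omega>)) = measure_pmf.expectation (pair_pmf P P) (case_prod h)" for k
    by (simp add: expectation_pair_Y)
qed

end

section \<open>The transmitted symbols\<close>

definition start_time :: "('a \<Rightarrow> bool list) \<Rightarrow> (nat \<Rightarrow> 'a) \<Rightarrow> nat \<Rightarrow> nat" where
  "start_time e a k = (\<Sum>i<k. length (e (a i)))"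

lemma strict_mono_start_time:
  assumes "\<And>x. 1 \<le> length (e x)"
  shows "strict_mono (start_time e a)"
  using assms by (auto simp: strict_mono_Suc_iff start_time_def Suc_le_eq)

lemma sched_eq_start_time:
  assumes "\<forall>k<n. xs (sched e xs k) = a k" "k \<le> n"
  shows "sched e xs k = start_time e a k"
  using assms(2)
proof (induction k)
  case 0
  then show ?case by (simp add: start_time_def)
next
  case (Suc k)
  then have "sched e xs k = start_time e a k" "k < n"
    by simp_all
  moreover from \<open>k < n\<close> have "xs (sched e xs k) = a k"
    using assms(1) by blast
  ultimately show ?case by (simp add: start_time_def)
qed

lemma sent_prefix_iff_start_time:
  "(\<forall>k<n. xs (sched e xs k) = a k) \<longleftrightarrow> (\<forall>k<n. xs (start_time e a k) = a k)"
proof (induction n)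
  case 0
  then show ?case by simp
next
  case (Suc n)
  show ?case
  proof
    assume sent: "\<forall>k<Suc n. xs (sched e xs k) = a k"
    then show "\<forall>k<Suc n. xs (start_time e a k) = a k"
      using sched_eq_start_time[OF sent] by (metis less_imp_le)
  next
    assume start: "\<forall>k<Suc n. xs (start_time e a k) = a k"
    then have "\<forall>k<n. xs (sched e xs k) = a k"
      using Suc by simp
    moreover from sched_eq_start_time[OF this] have "sched e xs n = start_time e a n"
      by simp
    ultimately show "\<forall>k<Suc n. xs (sched e xs k) = a k"
      using start by (auto simp: less_Suc_eq)
  qed
qed

locale memoryless_update = finite_iid M X P
  for M :: "'w measure" and X :: "nat \<Rightarrow> 'w \<Rightarrow> 'a::finite" and P :: "'a pmf" +
  fixes e :: "'a \<Rightarrow> bool list"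
  assumes length_pos: "\<And>x. 1 \<le> length (e x)"
begin

definition sent :: "nat \<Rightarrow> 'w \<Rightarrow> 'a" where
  "sent k \<omega> = X (sched e (\<lambda>t. X t \<omega>) k) \<omega>"

lemma measurable_sched [measurable]:
  "(\<lambda>\<omega>. sched e (\<lambda>t. X t \<omega>) k) \<in> M \<rightarrow>\<^sub>M count_space UNIV"
proof (induction k)
  case 0
  then show ?case by simp
next
  case (Suc k)
  have "(\<lambda>\<omega>. (\<lambda>i \<omega>. i + length (e (X i \<omega>))) (sched e (\<lambda>t. X t \<omega>) k) \<omega>) \<in> M \<rightarrow>\<^sub>M count_space UNIV"
    by (rule measurable_compose_countable[OF _ Suc]) (rule measurable_compose[OF measurable_Y], simp)
  then show ?case by simp
qed

lemma measurable_sent [measurable]: "sent k \<in> M \<rightarrow>\<^sub>M count_space UNIV"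
proof -
  have "(\<lambda>\<omega>. (\<lambda>i \<omega>. X i \<omega>) (sched e (\<lambda>t. X t \<omega>) k) \<omega>) \<in> M \<rightarrow>\<^sub>M count_space UNIV"
    by (rule measurable_compose_countable[OF _ measurable_sched]) simp
  then show ?thesis by (simp add: sent_def[abs_def])
qed

text \<open>Once the transmitted symbols are prescribed to be a, the start times are the deterministic,
  strictly increasing start_time e a k, so the event is an intersection of independent events
  about distinct inputs.\<close>
lemma prob_sent_prefix_eq:
  "prob {\<omega>\<in>space M. \<forall>k<n. sent k \<omega> = a k} = (\<Prod>k<n. pmf P (a k))"
proof (cases "n = 0")
  case True
  then show ?thesis by (simp add: prob_space)
next
  case False
  let ?t = "start_time e a"
  have inj: "inj_on ?t {..<n}"
    by (rule strict_mono_imp_inj_on[OF strict_mono_start_time[OF length_pos]])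
  define A where "A j = {a (the_inv_into {..<n} ?t j)}" for j
  have A: "A (?t k) = {a k}" if "k < n" for k
    unfolding A_def using the_inv_into_f_f[OF inj, of k] that by simp
  have "{\<omega>\<in>space M. \<forall>k<n. sent k \<omega> = a k} = {\<omega>\<in>space M. \<forall>k<n. X (?t k) \<omega> = a k}"
    using sent_prefix_iff_start_time[of n "\<lambda>t. X t _" e a] by (auto simp: sent_def)
  also have "\<dots> = (\<Inter>j\<in>?t ` {..<n}. X j -` A j \<inter> space M)"
    using False by (auto simp: A)
  also have "prob \<dots> = (\<Prod>j\<in>?t ` {..<n}. prob (X j -` A j \<inter> space M))"
    by (rule indep_varsD[OF indep_Y]) (use False in auto)
  also have "\<dots> = (\<Prod>k<n. pmf P (a k))"
    by (simp add: prod.reindex[OF inj] A prob_Y measure_pmf_single)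
  finally show ?thesis .
qed

lemma prob_sent_prefix_in:
  "prob {\<omega>\<in>space M. \<forall>k<n. sent k \<omega> \<in> B k} = (\<Prod>k<n. measure_pmf.prob P (B k))"
proof -
  define C where "C a = {\<omega>\<in>space M. \<forall>k<n. sent k \<omega> = a k}" for a
  have "{\<omega>\<in>space M. \<forall>k<n. sent k \<omega> \<in> B k} = (\<Union>a\<in>PiE {..<n} B. C a)"
  proof safe
    fix \<omega> assume "\<omega> \<in> space M" "\<forall>k<n. sent k \<omega> \<in> B k"
    then show "\<omega> \<in> (\<Union>a\<in>PiE {..<n} B. C a)"
      by (intro UN_I[of "restrict (\<lambda>k. sent k \<omega>) {..<n}"]) (auto simp: C_def)
  qed (auto simp: C_def PiE_def Pi_def)
  also have "prob \<dots> = (\<Sum>a\<in>PiE {..<n} B. prob (C a))"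
  proof (rule finite_measure_finite_Union)
    show "disjoint_family_on C (PiE {..<n} B)"
      unfolding disjoint_family_on_def
    proof (intro ballI impI)
      fix a b assume "a \<in> PiE {..<n} B" "b \<in> PiE {..<n} B" "a \<noteq> b"
      then obtain k where "k < n" "a k \<noteq> b k"
        by (meson PiE_ext lessThan_iff)
      then show "C a \<inter> C b = {}"
        by (auto simp: C_def)
    qed
    have "C a \<in> sets M" for a
      unfolding C_def by measurable
    then show "C ` PiE {..<n} B \<subseteq> sets M"
      by blast
  qed (simp add: finite_PiE)
  also have "\<dots> = (\<Prod>k<n. \<Sum>x\<in>B k. pmf P x)"
    unfolding C_def prob_sent_prefix_eq by (rule prod_sum_PiE[symmetric]) auto
  finally show ?thesis
    by (simp add: measure_measure_pmf_finite)
qed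

lemma prob_sent: "prob (sent k -` A \<inter> space M) = measure_pmf.prob P A"
proof -
  have "sent k -` A \<inter> space M = {\<omega>\<in>space M. \<forall>i<Suc k. sent i \<omega> \<in> (if i = k then A else UNIV)}"
    by (auto simp: less_Suc_eq)
  moreover have "(\<Prod>i<k. measure_pmf.prob P (if i = k then A else UNIV)) = 1"
    by (rule prod.neutral) simp
  ultimately show ?thesis
    by (simp add: prob_sent_prefix_in)
qed

lemma distr_sent: "distr M (count_space UNIV) (sent k) = measure_pmf P"
proof (rule measure_eqI_countable[where A=UNIV])
  fix x
  show "emeasure (distr M (count_space UNIV) (sent k)) {x} = emeasure (measure_pmf P) {x}"
    by (simp add: emeasure_distr emeasure_eq_measure prob_sent measure_pmf.emeasure_eq_measure)
qed simp_all

lemma indep_sent: "indep_vars (\<lambda>_. count_space UNIV) sent UNIV"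
proof -
  have "indep_vars (\<lambda>_. count_space UNIV) sent J" if J: "J \<noteq> {}" "finite J" for J
  proof (subst indep_vars_finite[where E="\<lambda>_. sets (count_space UNIV)"])
    show "\<forall>A\<in>Pi J (\<lambda>_. sets (count_space UNIV)).
      prob (\<Inter>j\<in>J. sent j -` A j \<inter> space M) = (\<Prod>j\<in>J. prob (sent j -` A j \<inter> space M))"
    proof
      fix A :: "nat \<Rightarrow> 'a set"
      define n where "n = Suc (Max J)"
      have J_n: "J \<subseteq> {..<n}" using J by (auto simp: n_def less_Suc_eq_le)
      have "(\<Inter>j\<in>J. sent j -` A j \<inter> space M)
          = {\<omega>\<in>space M. \<forall>k<n. sent k \<omega> \<in> (if k \<in> J then A k else UNIV)}"
        using J(1) J_n by (auto split: if_splits)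
      then have "prob (\<Inter>j\<in>J. sent j -` A j \<inter> space M)
          = prob {\<omega>\<in>space M. \<forall>k<n. sent k \<omega> \<in> (if k \<in> J then A k else UNIV)}"
        by simp
      also have "\<dots> = (\<Prod>k<n. measure_pmf.prob P (if k \<in> J then A k else UNIV))"
        by (rule prob_sent_prefix_in)
      also have "\<dots> = (\<Prod>k\<in>{..<n} \<inter> J. measure_pmf.prob P (A k))"
        by (subst prod.inter_restrict) (auto intro: prod.cong)
      also have "{..<n} \<inter> J = J"
        using J_n by blast
      finally show "prob (\<Inter>j\<in>J. sent j -` A j \<inter> space M) = (\<Prod>j\<in>J. prob (sent j -` A j \<inter> space M))"
        by (simp add: prob_sent)
    qed
  qed (use J in \<open>auto simp: Int_stable_def\<close>)
  then show ?thesis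
    unfolding indep_vars_def by (subst indep_sets_finite_index_sets) blast
qed

lemma finite_iid_sent: "finite_iid M sent P"
  by unfold_locales (rule indep_sent, rule distr_sent)

end

section \<open>The age process along a fixed input sequence\<close>

locale update_schedule =
  fixes e :: "'a \<Rightarrow> bool list" and xs :: "nat \<Rightarrow> 'a" and Lmax :: nat
  assumes length_pos: "\<And>x. 1 \<le> length (e x)"
    and length_le: "\<And>x. length (e x) \<le> Lmax"
begin

abbreviation s :: "nat \<Rightarrow> nat" where
  "s \<equiv> sched e xs"

definition L :: "nat \<Rightarrow> nat" where
  "L k = length (e (xs (s k)))"

lemma s_Suc: "s (Suc k) = s k + L k"
  by (simp add: L_def)

declare sched.simps(2) [simp del]

lemma L_pos: "1 \<le> L k"
  unfolding L_def by (rule length_pos)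

lemma L_le: "L k \<le> Lmax"
  unfolding L_def by (rule length_le)

lemma strict_mono_s: "strict_mono s"
  using L_pos by (auto simp: strict_mono_Suc_iff s_Suc Suc_le_eq)

lemma s_eq_sum: "s n = (\<Sum>k<n. L k)"
  by (induction n) (auto simp: s_Suc)

lemma s_le: "s n \<le> Lmax * n"
  using sum_bounded_above[of "{..<n}" L Lmax] L_le by (simp add: s_eq_sum mult.commute)

text \<open>For n = 0 the truncated n - 1 gives s 0 = 0, matching U(t) = 0 before the first delivery.\<close>
lemma recv_index_eq:
  assumes "s n \<le> t" "t < s (Suc n)"
  shows "recv_index e xs t = s (n - 1)"
proof (cases n)
  case 0
  then show ?thesis using assms by (simp add: recv_index_def)
next
  case (Suc m)
  have "(THE k. 1 \<le> k \<and> s k \<le> t \<and> t < s (Suc k)) = n"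
  proof (rule the_equality)
    fix k assume k: "1 \<le> k \<and> s k \<le> t \<and> t < s (Suc k)"
    show "k = n"
    proof (rule ccontr)
      assume "k \<noteq> n"
      then have "Suc k \<le> n \<or> Suc n \<le> k"
        by linarith
      then have "s (Suc k) \<le> s n \<or> s (Suc n) \<le> s k"
        by (auto simp: strict_mono_less_eq[OF strict_mono_s])
      then show False using k assms by linarith
    qed
  qed (use assms Suc in simp)
  moreover have "\<not> t < s 1"
    using assms Suc strict_mono_less_eq[OF strict_mono_s, of 1 n] by simp
  ultimately show ?thesis
    by (simp add: recv_index_def)
qed

definition epoch :: "nat \<Rightarrow> nat" where
  "epoch t = (LEAST n. t < s (Suc n))"

lemma epoch_bounds: "s (epoch t) \<le> t" "t < s (Suc (epoch t))"
proof -
  have "t < s (Suc t)"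
    using strict_mono_imp_increasing[OF strict_mono_s, of "Suc t"] by simp
  then show less: "t < s (Suc (epoch t))"
    unfolding epoch_def by (rule LeastI)
  show "s (epoch t) \<le> t"
  proof (cases "epoch t")
    case (Suc m)
    then have "\<not> t < s (Suc m)"
      using not_less_Least[of m "\<lambda>n. t < s (Suc n)"] by (simp add: epoch_def)
    then show ?thesis using Suc by simp
  qed simp
qed

lemma age_epoch: "age e xs t = real t - real (s (epoch t - 1))"
  using recv_index_eq[OF epoch_bounds] by (simp add: age_def)

lemma age_bounds: "0 \<le> age e xs t" "age e xs t \<le> 2 * real Lmax"
proof -
  let ?n = "epoch t"
  have "s (?n - 1) \<le> s ?n"
    by (simp add: strict_mono_less_eq[OF strict_mono_s])
  then show "0 \<le> age e xs t"
    using epoch_bounds(1)[of t] by (simp add: age_epoch)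
  have "s (Suc ?n) \<le> s (?n - 1) + 2 * Lmax"
    using L_le[of ?n] L_le[of "?n - 1"] by (cases ?n) (simp_all add: s_Suc)
  then show "age e xs t \<le> 2 * real Lmax"
    using epoch_bounds(2)[of t] by (simp add: age_epoch)
qed

definition prev_len :: "nat \<Rightarrow> nat" where
  "prev_len n = (case n of 0 \<Rightarrow> 0 | Suc m \<Rightarrow> L m)"

lemma sum_age_block:
  "(\<Sum>t\<in>{s n..<s (Suc n)}. age e xs t) = real (L n) * real (prev_len n) + real (L n) * (real (L n) - 1) / 2"
proof -
  have age: "age e xs (s n + j) = real (prev_len n) + real j" if "j < L n" for j
  proof -
    have "age e xs (s n + j) = real (s n + j) - real (s (n - 1))"
      using recv_index_eq[of n "s n + j"] that by (simp add: age_def s_Suc)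
    also have "\<dots> = real (prev_len n) + real j"
      by (cases n) (simp_all add: prev_len_def s_Suc)
    finally show ?thesis .
  qed
  have "(\<Sum>t\<in>{s n..<s (Suc n)}. age e xs t) = (\<Sum>j<L n. age e xs (s n + j))"
    using sum.shift_bounds_nat_ivl[of "age e xs" 0 "s n" "L n"]
    by (simp add: s_Suc add.commute lessThan_atLeast0)
  also have "\<dots> = (\<Sum>j<L n. real (prev_len n) + real j)"
    by (rule sum.cong) (simp_all add: age)
  also have "\<dots> = real (L n) * real (prev_len n) + real (L n) * (real (L n) - 1) / 2"
    by (simp add: sum.distrib sum_real_lessThan)
  finally show ?thesis .
qed

definition total_age :: "nat \<Rightarrow> real" where
  "total_age T = (\<Sum>t<T. age e xs t)"

lemma total_age_sched:
  "total_age (s n) = (\<Sum>k<n. real (L k) * real (prev_len k) + real (L k) * (real (L k) - 1) / 2)"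
proof (induction n)
  case 0
  then show ?case by (simp add: total_age_def)
next
  case (Suc n)
  have "total_age (s (Suc n)) = total_age (s n) + (\<Sum>t\<in>{s n..<s (Suc n)}. age e xs t)"
    unfolding total_age_def lessThan_atLeast0
    by (rule sum.atLeastLessThan_concat[symmetric]) (simp_all add: s_Suc)
  then show ?case
    using Suc by (simp add: sum_age_block)
qed

lemma sum_prev_len:
  "(\<Sum>k<n. real (L k) * real (prev_len k))
     = (\<Sum>k<n. real (L k) * real (L (Suc k))) - (case n of 0 \<Rightarrow> 0 | Suc m \<Rightarrow> real (L m) * real (L n))"
proof (induction n)
  case (Suc n)
  have "real (L n) * real (prev_len n) = (case n of 0 \<Rightarrow> 0 | Suc m \<Rightarrow> real (L m) * real (L n))"
    by (cases n) (simp_all add: prev_len_def)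
  with Suc show ?case
    by simp
qed simp

lemma total_age_sched_tendsto:
  assumes "(\<lambda>n. (\<Sum>k<n. real (L k)) / real n) \<longlonglongrightarrow> \<mu>"
    and "(\<lambda>n. (\<Sum>k<n. real (L k) ^ 2) / real n) \<longlonglongrightarrow> q"
    and "(\<lambda>n. (\<Sum>k<n. real (L k) * real (L (Suc k))) / real n) \<longlonglongrightarrow> p"
  shows "(\<lambda>n. total_age (s n) / real n) \<longlonglongrightarrow> p + q / 2 - \<mu> / 2"
proof (rule tendsto_div_bounded_diff[OF _ filterlim_real_sequentially])
  define b where "b n = (\<Sum>k<n. real (L k) * real (L (Suc k))) + (\<Sum>k<n. real (L k) ^ 2) / 2
    - (\<Sum>k<n. real (L k)) / 2" for n
  have "(\<lambda>n. (\<Sum>k<n. real (L k) * real (L (Suc k))) / real n + ((\<Sum>k<n. real (L k) ^ 2) / real n) / 2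
      - ((\<Sum>k<n. real (L k)) / real n) / 2) \<longlonglongrightarrow> p + q / 2 - \<mu> / 2"
    by (intro tendsto_intros assms) simp_all
  then show "(\<lambda>n. b n / real n) \<longlonglongrightarrow> p + q / 2 - \<mu> / 2"
    by (simp add: b_def add_divide_distrib diff_divide_distrib mult.commute)
  fix n
  have "total_age (s n) = b n - (case n of 0 \<Rightarrow> 0 | Suc m \<Rightarrow> real (L m) * real (L n))"
    unfolding total_age_sched b_def
    by (simp add: sum.distrib sum_subtractf sum_divide_distrib sum_prev_len power2_eq_square
        right_diff_distrib diff_divide_distrib)
  moreover have "real (L m) * real (L n) \<le> real Lmax * real Lmax" for m
    using L_le by (intro mult_mono) auto
  ultimately show "\<bar>total_age (s n) - b n\<bar> \<le> real Lmax * real Lmax"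
    by (cases n) auto
qed

lemma filterlim_epoch: "filterlim epoch at_top sequentially"
  unfolding filterlim_at_top
proof
  fix n
  show "eventually (\<lambda>t. n \<le> epoch t) sequentially"
  proof (rule eventually_sequentiallyI)
    fix t assume "Lmax * n \<le> t"
    also have "t < Lmax * Suc (epoch t)"
      using epoch_bounds(2)[of t] s_le[of "Suc (epoch t)"] by linarith
    finally show "n \<le> epoch t"
      by (metis less_Suc_eq_le mult_less_cancel1)
  qed
qed

lemma sum_age_eq_total_age: "(\<Sum>t=1..T. age e xs t) = total_age T + age e xs T"
proof -
  have "age e xs 0 = 0"
    using age_bounds(1)[of 0] by (simp add: age_def)
  then show ?thesis
    by (induction T) (simp_all add: total_age_def)
qed

theorem avg_age_tendsto:
  assumes mean: "(\<lambda>n. (\<Sum>k<n. real (L k)) / real n) \<longlonglongrightarrow> \<mu>"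
    and "(\<lambda>n. (\<Sum>k<n. real (L k) ^ 2) / real n) \<longlonglongrightarrow> q"
    and "(\<lambda>n. (\<Sum>k<n. real (L k) * real (L (Suc k))) / real n) \<longlonglongrightarrow> p"
    and "0 < \<mu>"
  shows "(\<lambda>T. (1 / real T) * (\<Sum>t=1..T. age e xs t)) \<longlonglongrightarrow> (p + q / 2 - \<mu> / 2) / \<mu>"
proof -
  note real_epoch = filterlim_compose[OF filterlim_real_sequentially filterlim_epoch]
  have "(\<lambda>t. total_age t / real (epoch t)) \<longlonglongrightarrow> p + q / 2 - \<mu> / 2"
  proof (rule tendsto_div_bounded_diff[OF _ real_epoch])
    show "(\<lambda>t. total_age (s (epoch t)) / real (epoch t)) \<longlonglongrightarrow> p + q / 2 - \<mu> / 2"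
      using filterlim_compose[OF total_age_sched_tendsto[OF assms(1-3)] filterlim_epoch] .
    fix t
    have "total_age t = total_age (s (epoch t)) + (\<Sum>u\<in>{s (epoch t)..<t}. age e xs u)"
      unfolding total_age_def lessThan_atLeast0
      by (rule sum.atLeastLessThan_concat[symmetric]) (simp_all add: epoch_bounds)
    moreover have "(\<Sum>u\<in>{s (epoch t)..<t}. age e xs u) \<le> real Lmax * (2 * real Lmax)"
    proof -
      have "(\<Sum>u\<in>{s (epoch t)..<t}. age e xs u) \<le> real (card {s (epoch t)..<t}) * (2 * real Lmax)"
        by (rule sum_bounded_above) (rule age_bounds)
      also have "card {s (epoch t)..<t} \<le> Lmax"
        using epoch_bounds[of t] L_le[of "epoch t"] by (simp add: s_Suc)
      then have "real (card {s (epoch t)..<t}) * (2 * real Lmax) \<le> real Lmax * (2 * real Lmax)"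
        by (intro mult_right_mono) auto
      finally show ?thesis .
    qed
    ultimately show "\<bar>total_age t - total_age (s (epoch t))\<bar> \<le> real Lmax * (2 * real Lmax)"
      using sum_nonneg[of "{s (epoch t)..<t}" "age e xs"] age_bounds(1) by auto
  qed
  moreover have "(\<lambda>t. real t / real (epoch t)) \<longlonglongrightarrow> \<mu>"
  proof (rule tendsto_div_bounded_diff[OF _ real_epoch])
    show "(\<lambda>t. real (s (epoch t)) / real (epoch t)) \<longlonglongrightarrow> \<mu>"
      using filterlim_compose[OF mean filterlim_epoch] by (simp add: s_eq_sum)
    fix t
    show "\<bar>real t - real (s (epoch t))\<bar> \<le> real Lmax"
      using epoch_bounds[of t] L_le[of "epoch t"] by (simp add: s_Suc)
  qed
  ultimately have "(\<lambda>t. (total_age t / real (epoch t)) / (real t / real (epoch t)))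
      \<longlonglongrightarrow> (p + q / 2 - \<mu> / 2) / \<mu>"
    using \<open>0 < \<mu>\<close> by (intro tendsto_divide) auto
  moreover have "eventually (\<lambda>t. (total_age t / real (epoch t)) / (real t / real (epoch t))
      = total_age t / real t) sequentially"
    using filterlim_epoch[unfolded filterlim_at_top, rule_format, of 1] by (elim eventually_mono) simp
  ultimately have "(\<lambda>t. total_age t / real t) \<longlonglongrightarrow> (p + q / 2 - \<mu> / 2) / \<mu>"
    by (rule Lim_transform_eventually)
  then have "(\<lambda>T. (total_age T + age e xs T) / real T) \<longlonglongrightarrow> (p + q / 2 - \<mu> / 2) / \<mu>"
    by (rule tendsto_div_bounded_diff[OF _ filterlim_real_sequentially, where K="2 * real Lmax"])
      (simp add: age_bounds)
  then show ?thesis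
    unfolding sum_age_eq_total_age by simp
qed

end

context memoryless_update
begin

theorem AE_avg_age_tendsto:
  defines "\<mu> \<equiv> measure_pmf.expectation P (\<lambda>x. real (length (e x)))"
    and "q \<equiv> measure_pmf.expectation P (\<lambda>x. (real (length (e x)))\<^sup>2)"
  shows "AE \<omega> in M. (\<lambda>T. (1 / real T) * (\<Sum>t=1..T. age e (\<lambda>t. X t \<omega>) t))
    \<longlonglongrightarrow> \<mu> + q / (2 * \<mu>) - 1 / 2"
proof -
  interpret sent: finite_iid M sent P
    by (rule finite_iid_sent)
  define len where "len x = real (length (e x))" for x
  have "1 \<le> \<mu>"
    unfolding \<mu>_def using length_pos
    by (intro measure_pmf.integral_ge_const integrable_measure_pmf_finite) auto
  have \<mu>: "\<mu> = measure_pmf.expectation P len" and q: "q = measure_pmf.expectation P (\<lambda>x. len x ^ 2)"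
    by (simp_all add: \<mu>_def q_def len_def[abs_def])
  have "AE \<omega> in M. (\<lambda>n. (\<Sum>k<n. len (sent k \<omega>)) / real n) \<longlonglongrightarrow> \<mu>"
    using sent.AE_pair_avg_tendsto[of "\<lambda>x y. len x"] expectation_pair_pmf_fst[where f=len and p=P and q=P]
    by (simp add: \<mu> split_beta')
  moreover have "AE \<omega> in M. (\<lambda>n. (\<Sum>k<n. len (sent k \<omega>) ^ 2) / real n) \<longlonglongrightarrow> q"
    using sent.AE_pair_avg_tendsto[of "\<lambda>x y. len x ^ 2"] expectation_pair_pmf_fst[where f="\<lambda>x. len x ^ 2" and p=P and q=P]
    by (simp add: q split_beta')
  moreover have "AE \<omega> in M. (\<lambda>n. (\<Sum>k<n. len (sent k \<omega>) * len (sent (Suc k) \<omega>)) / real n) \<longlonglongrightarrow> \<mu> * \<mu>"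
    using sent.AE_pair_avg_tendsto[of "\<lambda>x y. len x * len y"]
    by (simp add: \<mu> expectation_pair_pmf_mult)
  ultimately show ?thesis
  proof eventually_elim
    case (elim \<omega>)
    interpret update_schedule e "\<lambda>t. X t \<omega>" "Max (range (\<lambda>x. length (e x)))"
      by unfold_locales (use length_pos in simp_all)
    have "len (sent k \<omega>) = real (L k)" for k
      by (simp add: len_def L_def sent_def)
    then have "(\<lambda>T. (1 / real T) * (\<Sum>t=1..T. age e (\<lambda>t. X t \<omega>) t)) \<longlonglongrightarrow> (\<mu> * \<mu> + q / 2 - \<mu> / 2) / \<mu>"
      using elim \<open>1 \<le> \<mu>\<close> by (intro avg_age_tendsto) simp_all
    also have "(\<mu> * \<mu> + q / 2 - \<mu> / 2) / \<mu> = \<mu> + q / (2 * \<mu>) - 1 / 2"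
      using \<open>1 \<le> \<mu>\<close> by (simp add: field_simps)
    finally show ?case .
  qed
qed

end

theorem theorem1:
  fixes M :: "'w measure" and X :: "nat \<Rightarrow> 'w \<Rightarrow> 'a::finite"
    and P :: "'a pmf" and e :: "'a \<Rightarrow> bool list"
  assumes "CARD('a) \<ge> 2"
    and "prob_space M"
    and "prob_space.indep_vars M (\<lambda>_. count_space UNIV) X UNIV"
    and "\<And>t. distr M (count_space UNIV) (X t) = measure_pmf P"
    and "prefix_free_code e"
    and "\<And>x. length (e x) \<ge> 1"
  shows "AE \<omega> in M. avg_age e (\<lambda>t. X t \<omega>) =
           ereal (measure_pmf.expectation P (\<lambda>x. real (length (e x)))
             + measure_pmf.expectation P (\<lambda>x. (real (length (e x)))\<^sup>2)
               / (2 * measure_pmf.expectation P (\<lambda>x. real (length (e x))))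
             - 1 / 2)"
proof -
  interpret prob_space M
    by (rule assms(2))
  interpret memoryless_update M X P e
    by unfold_locales (use assms(3,4,6) in auto)
  show ?thesis
    using AE_avg_age_tendsto
  proof eventually_elim
    case (elim \<omega>)
    show ?case
      unfolding avg_age_def by (rule lim_imp_Limsup[OF _ tendsto_ereal[OF elim]]) simp
  qed
qed

end
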